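(* Let $E\ge0$ be an integer and let $\mathbf a=(a_1,\dots,a_m)$ be a partition. Then there exists a partition $\mathbf e=(e_1,\dots,e_{m-1})$ such that $\sum_{i=1}^{m-1}e_i=E$ and $\mathbf a\prec'\mathbf e$ if and only if $$E=\sum_{i=2}^m a_i\quad\text{or}\quad E\ge a_1+\sum_{i=3}^m a_i.$$
   Context: A partition is a nonincreasing finite sequence of nonnegative integers. 1-step generalized majorization: for nonincreasing integer sequences $\mathbf a=(a_1,\dots,a_m)$ and $\mathbf e=(e_1,\dots,e_{m-1})$, set $e_m=-\infty$ and $h=\min\{i: e_i<a_i\}$; then $\mathbf a\prec'\mathbf e$ means $e_i=a_{i+1}$ for all $h\le i\le m-1$. Empty sums are $0$. *)

theory Defs
  imports Main
begin

definition is_partition :: "nat list \<Rightarrow> bool" where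
  "is_partition xs \<longleftrightarrow> sorted_wrt (\<ge>) xs"

text \<open>1-step generalized majorization a \<prec>' e, 0-indexed: a = a!0..a!(m-1),
  e = e!0..e!(m-2), with the convention e!(m-1) = -infinity, so the index
  m-1 always belongs to the set defining h.\<close>
definition gen_maj1 :: "nat list \<Rightarrow> nat list \<Rightarrow> bool" where
  "gen_maj1 a e \<longleftrightarrow>
     length e = length a - 1 \<and>
     (let m = length a;
          h = (LEAST i. i < m \<and> (i = m - 1 \<or> e ! i < a ! i))
      in \<forall>i. h \<le> i \<and> i < m - 1 \<longrightarrow> e ! i = a ! (i + 1))"

end

theory Submission
  imports Defs
begin

text \<open>Write \<open>h\<close> for the split index of \<open>a \<prec>' e\<close>, so that \<open>a\<^sub>i \<le> e\<^sub>i\<close> below \<open>h\<close> and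
  \<open>e\<^sub>i = a\<^sub>i\<^sub>+\<^sub>1\<close> from \<open>h\<close> on. If \<open>h = 0\<close> then \<open>e\<close> is \<open>a\<close> with its first part deleted and
  \<open>\<Sum>e = a\<^sub>2 + \<dots> + a\<^sub>m\<close>. Otherwise, since \<open>a\<close> is nonincreasing, \<open>e\<close> dominates
  \<open>(a\<^sub>1, a\<^sub>3, \<dots>, a\<^sub>m)\<close> entrywise, which gives \<open>\<Sum>e \<ge> a\<^sub>1 + a\<^sub>3 + \<dots> + a\<^sub>m\<close>.
  Conversely \<open>(a\<^sub>2, \<dots>, a\<^sub>m)\<close> and \<open>(x, a\<^sub>3, \<dots>, a\<^sub>m)\<close> with \<open>x \<ge> a\<^sub>1\<close> are partitions
  satisfying \<open>a \<prec>' e\<close>, realising every admissible value of \<open>E\<close>.\<close>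

text \<open>The least index of the definition may be replaced by any index \<open>h\<close> below which
  \<open>e\<close> dominates \<open>a\<close>: the least index is then at least \<open>h\<close>.\<close>
lemma gen_maj1_iff:
  assumes "a \<noteq> []"
  shows "gen_maj1 a e \<longleftrightarrow> length e = length a - 1 \<and>
    (\<exists>h<length a. (\<forall>i<h. a ! i \<le> e ! i) \<and>
                   (\<forall>i. h \<le> i \<and> i < length a - 1 \<longrightarrow> e ! i = a ! (i + 1)))"
    (is "_ \<longleftrightarrow> _ \<and> (\<exists>h<_. ?dom h \<and> ?shift h)")
proof -
  define m where "m = length a"
  define P where "P = (\<lambda>i. i < m \<and> (i = m - 1 \<or> e ! i < a ! i))"
  have m_pos: "m > 0"
    using assms by (simp add: m_def)
  have least_le: "Least P \<le> m - 1"
    by (rule Least_le) (simp add: P_def m_pos)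
  have maj_iff: "gen_maj1 a e \<longleftrightarrow> length e = m - 1 \<and> ?shift (Least P)"
    by (simp add: gen_maj1_def Let_def m_def P_def)
  have dom_least: "?dom (Least P)"
  proof (intro allI impI)
    fix i
    assume "i < Least P"
    then have "\<not> P i" and "i < m - 1"
      using not_less_Least least_le by auto
    then show "a ! i \<le> e ! i"
      by (auto simp: P_def not_less)
  qed
  have ge_least: "h \<le> Least P" if "h < m" and dom_h: "?dom h" for h
  proof (rule ccontr)
    assume "\<not> h \<le> Least P"
    then have "Least P < m - 1" and "a ! Least P \<le> e ! Least P"
      using that by auto
    moreover have "P (Least P)"
      by (rule LeastI[of P "m - 1"]) (simp add: P_def m_pos)
    ultimately show False
      by (simp add: P_def)
  qed
  show ?thesis
  proof
    assume "gen_maj1 a e"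
    then have "length e = m - 1" and "?shift (Least P)"
      using maj_iff by auto
    moreover have "Least P < m"
      using least_le m_pos by simp
    ultimately show "length e = length a - 1 \<and> (\<exists>h<length a. ?dom h \<and> ?shift h)"
      unfolding m_def[symmetric] using dom_least by blast
  next
    assume "length e = length a - 1 \<and> (\<exists>h<length a. ?dom h \<and> ?shift h)"
    then obtain h where "length e = m - 1" "h < m" "?dom h" "?shift h"
      by (auto simp: m_def)
    moreover from this have "?shift (Least P)"
      using ge_least by (meson order_trans)
    ultimately show "gen_maj1 a e"
      using maj_iff by blast
  qed
qed

lemma gen_maj1_drop1: "a \<noteq> [] \<Longrightarrow> gen_maj1 a (drop 1 a)"
  by (subst gen_maj1_iff) auto

lemma gen_maj1_Cons_drop2:
  assumes "length a \<ge> 2" and "a ! 0 \<le> x"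
  shows "gen_maj1 a (x # drop 2 a)"
  using assms by (subst gen_maj1_iff) (auto intro!: exI[of _ 1] simp: nth_Cons')

lemma is_partition_Cons_drop2:
  assumes "is_partition a" and "a ! 0 \<le> x"
  shows "is_partition (x # drop 2 a)"
proof (cases a rule: remdups_adj.cases)
  case (3 y z rest)
  then show ?thesis
    using assms by (auto simp: is_partition_def)
qed (use assms in \<open>auto simp: is_partition_def\<close>)

lemma sum_list_le_if_list_all2:
  fixes xs ys :: "'a::ordered_comm_monoid_add list"
  shows "list_all2 (\<le>) xs ys \<Longrightarrow> sum_list xs \<le> sum_list ys"
  by (rule sum_list_mono2) (auto simp: list_all2_conv_all_nth)

lemma gen_maj1_cases:
  assumes "is_partition a" and "a \<noteq> []" and "gen_maj1 a e"
  shows "e = drop 1 a \<or> list_all2 (\<le>) (a ! 0 # drop 2 a) e"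
proof -
  obtain h where len: "length e = length a - 1" and "h < length a"
    and dom: "\<forall>i<h. a ! i \<le> e ! i"
    and shift: "\<forall>i. h \<le> i \<and> i < length a - 1 \<longrightarrow> e ! i = a ! (i + 1)"
    using assms(2,3) gen_maj1_iff by blast
  show ?thesis
  proof (cases "h = 0")
    case True
    then have "e = drop 1 a"
      using len shift by (intro nth_equalityI) auto
    then show ?thesis ..
  next
    case False
    have antimono: "a ! (i + 1) \<le> a ! i" if "i + 1 < length a" for i
      using assms(1) that by (simp add: is_partition_def sorted_wrt_iff_nth_less)
    have shifted_le: "a ! (i + 1) \<le> e ! i" if "i < length e" for i
    proof (cases "i < h")
      case True
      have "i + 1 < length a"
        using that len by simp
      then show ?thesis
        using order_trans[OF antimono] dom True by blast
    qed (use that len shift in simp)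
    have "(a ! 0 # drop 2 a) ! i \<le> e ! i" if "i < length e" for i
      using that False dom shifted_le[of i] len by (cases i) auto
    moreover have "length (a ! 0 # drop 2 a) = length e"
      using False \<open>h < length a\<close> len by simp
    ultimately show ?thesis
      by (simp add: list_all2_conv_all_nth)
  qed
qed

theorem lemma5p2:
  fixes E :: nat and a :: "nat list"
  assumes "is_partition a" and "length a \<ge> 2"
  shows "(\<exists>e. is_partition e \<and> length e = length a - 1 \<and> sum_list e = E \<and> gen_maj1 a e)
         \<longleftrightarrow> (E = sum_list (drop 1 a) \<or> E \<ge> a ! 0 + sum_list (drop 2 a))"
proof
  assume "\<exists>e. is_partition e \<and> length e = length a - 1 \<and> sum_list e = E \<and> gen_maj1 a e"
  then obtain e where "sum_list e = E" and "gen_maj1 a e"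
    by blast
  moreover have "e = drop 1 a \<or> list_all2 (\<le>) (a ! 0 # drop 2 a) e"
    using assms \<open>gen_maj1 a e\<close> by (intro gen_maj1_cases) auto
  ultimately show "E = sum_list (drop 1 a) \<or> E \<ge> a ! 0 + sum_list (drop 2 a)"
    using sum_list_le_if_list_all2 by fastforce
next
  assume "E = sum_list (drop 1 a) \<or> E \<ge> a ! 0 + sum_list (drop 2 a)"
  then show "\<exists>e. is_partition e \<and> length e = length a - 1 \<and> sum_list e = E \<and> gen_maj1 a e"
  proof
    assume "E = sum_list (drop 1 a)"
    moreover have "is_partition (drop 1 a)"
      using assms(1) by (simp add: is_partition_def)
    moreover have "gen_maj1 a (drop 1 a)"
      using assms(2) by (intro gen_maj1_drop1) auto
    ultimately show ?thesis
      by auto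
  next
    assume E_ge: "E \<ge> a ! 0 + sum_list (drop 2 a)"
    define x where "x = E - sum_list (drop 2 a)"
    have "a ! 0 \<le> x"
      using E_ge by (simp add: x_def)
    with assms have "is_partition (x # drop 2 a)" and "gen_maj1 a (x # drop 2 a)"
      by (simp_all add: is_partition_Cons_drop2 gen_maj1_Cons_drop2)
    moreover have "sum_list (x # drop 2 a) = E"
      using E_ge by (simp add: x_def)
    ultimately show ?thesis
      using assms(2) by (intro exI[of _ "x # drop 2 a"]) auto
  qed
qed

end
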